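(* Let $f\colon\mathbb{R}^n\to\mathbb{R}$ be differentiable, $\mu$-strongly convex, with $\|\nabla f(x)-\nabla f(y)\|\le L\|x-y\|$ for all $x,y$ (Euclidean norm), where $0<\mu<L$, and let $x_\star$ be its minimizer, $f_\star=f(x_\star)$. Let $\kappa=L/\mu$ and $\gamma=\frac{\sqrt{8\kappa+1}+3}{2\kappa-2}$. Given $x_0$, let $y_0=x_0$ and for $k=0,1,\dots$ \[ y_{k+1}=x_k-\tfrac1L\nabla f(x_k),\qquad x_{k+1}=y_{k+1}+\frac{1}{2\gamma+1}(y_{k+1}-y_k)+\frac{1}{2\gamma+1}(y_{k+1}-x_k). \] Then for $k=1,2,\dots$, \[ f(y_k)-f_\star\le(1+\gamma)^{-k+1}\,\frac{\mu+2L}{2}\,\|x_0-x_\star\|^2, \] and this bound is $\mathcal{O}\big(\exp(-\sqrt2\,k/\sqrt\kappa)\big)$.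
   Context: A function $f$ is $\mu$-strongly convex if $f(x)-\frac{\mu}{2}\|x\|^2$ is convex. The iteration is called SC-OGM. *)

theory Defs
  imports "HOL-Analysis.Analysis" "HOL-Library.Landau_Symbols"
begin

definition strongly_convex :: "real \<Rightarrow> ('a::real_inner \<Rightarrow> real) \<Rightarrow> bool" where
  "strongly_convex \<mu> f \<longleftrightarrow> convex_on UNIV (\<lambda>x. f x - \<mu> / 2 * (norm x)\<^sup>2)"

end

theory Submission
  imports Defs
begin

(* Let kappa = L/mu; gamma is the positive root of kappa gamma^2 = (1 + gamma)(2 + gamma).
   Alongside the iterates consider the auxiliary sequence z_0 = x_0,
   z_{k+1} = (z_k + gamma (x_k - grad f(x_k)/mu)) / (1 + gamma); the momentum step keeps
   gamma/(1+gamma) (x_k - z_k) = y_k - x_k. The Lyapunov function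
     Phi_k = f(x_k) - f* - |grad f(x_k)|^2/(2L) + mu/2 |z_{k+1} - x*|^2
   contracts by the factor 1/(1+gamma): Phi_k/(1+gamma) - Phi_{k+1} is a nonnegative combination
   of two interpolation inequalities for L-smooth mu-strongly convex functions (between x_k and
   x_{k+1}, and between x* and x_{k+1}) plus a sum of squares. The descent lemma gives
   f(y_{k+1}) - f* <= Phi_k, and Phi_0 <= (L + mu/2) |x_0 - x*|^2. Finally
   ln(1 + gamma) >= 2 gamma/(2 + gamma) >= sqrt(2/kappa) turns the rate into the exponential bound. *)

lemma has_real_derivative_along_line:
  fixes h :: "'a::real_inner \<Rightarrow> real"
  assumes "(h has_derivative (\<lambda>w. D \<bullet> w)) (at (v + t *\<^sub>R d))"
  shows "((\<lambda>t. h (v + t *\<^sub>R d)) has_real_derivative (D \<bullet> d)) (at t)"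
proof -
  have "((\<lambda>t. v + t *\<^sub>R d) has_derivative (\<lambda>s. s *\<^sub>R d)) (at t)"
    by (auto intro!: derivative_eq_intros)
  from has_derivative_compose[OF this assms]
  have "((\<lambda>t. h (v + t *\<^sub>R d)) has_derivative (\<lambda>s. (D \<bullet> d) * s)) (at t)"
    by (simp add: o_def mult.commute)
  then show ?thesis
    by (simp add: has_field_derivative_def)
qed

lemma convex_on_gradient_inequality:
  fixes h :: "'a::real_inner \<Rightarrow> real"
  assumes convex: "convex_on UNIV h" and deriv: "(h has_derivative (\<lambda>w. D \<bullet> w)) (at v)"
  shows "h v + D \<bullet> (u - v) \<le> h u"
proof -
  define \<phi> where "\<phi> t = h (v + t *\<^sub>R (u - v))" for t
  have "convex_on UNIV \<phi>"
  proof (rule convex_onI)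
    fix t s a :: real assume "0 < t" "t < 1"
    have "v + ((1 - t) * s + t * a) *\<^sub>R (u - v)
        = (1 - t) *\<^sub>R (v + s *\<^sub>R (u - v)) + t *\<^sub>R (v + a *\<^sub>R (u - v))"
      by (simp add: algebra_simps)
    then show "\<phi> ((1 - t) *\<^sub>R s + t *\<^sub>R a) \<le> (1 - t) * \<phi> s + t * \<phi> a"
      using convex_onD[OF convex, of t] \<open>0 < t\<close> \<open>t < 1\<close> by (simp add: \<phi>_def)
  qed auto
  moreover have "(\<phi> has_real_derivative (D \<bullet> (u - v))) (at 0)"
    unfolding \<phi>_def by (rule has_real_derivative_along_line) (use deriv in simp)
  ultimately have "D \<bullet> (u - v) * (1 - 0) \<le> \<phi> 1 - \<phi> 0"
    by (intro convex_on_imp_above_tangent[where A = UNIV]) auto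
  then show ?thesis
    by (simp add: \<phi>_def)
qed

lemma lipschitz_gradient_upper_bound:
  fixes f :: "'a::real_inner \<Rightarrow> real"
  assumes grad: "\<And>z. (f has_derivative (\<lambda>h. grad z \<bullet> h)) (at z)"
    and lip: "\<And>u v. norm (grad u - grad v) \<le> L * norm (u - v)"
  shows "f u \<le> f v + grad v \<bullet> (u - v) + L / 2 * (norm (u - v))\<^sup>2"
proof -
  define d where "d = u - v"
  define \<psi> where "\<psi> t = f (v + t *\<^sub>R d) - t * (grad v \<bullet> d) - L / 2 * t\<^sup>2 * (norm d)\<^sup>2" for t
  have "\<psi> 1 \<le> \<psi> 0"
  proof (rule DERIV_nonpos_imp_nonincreasing[of 0 1])
    fix t :: real assume t: "0 \<le> t" "t \<le> 1"
    have "((\<lambda>t. f (v + t *\<^sub>R d)) has_real_derivative (grad (v + t *\<^sub>R d) \<bullet> d)) (at t)"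
      by (rule has_real_derivative_along_line) (rule grad)
    then have "(\<psi> has_real_derivative ((grad (v + t *\<^sub>R d) - grad v) \<bullet> d - L * t * (norm d)\<^sup>2)) (at t)"
      unfolding \<psi>_def by (auto intro!: derivative_eq_intros simp: inner_diff_left)
    moreover have "(grad (v + t *\<^sub>R d) - grad v) \<bullet> d \<le> L * t * (norm d)\<^sup>2"
    proof -
      have "(grad (v + t *\<^sub>R d) - grad v) \<bullet> d \<le> norm (grad (v + t *\<^sub>R d) - grad v) * norm d"
        by (rule norm_cauchy_schwarz)
      also have "\<dots> \<le> L * norm (t *\<^sub>R d) * norm d"
        using lip[of "v + t *\<^sub>R d" v] by (simp add: mult_right_mono)
      finally show ?thesis
        using t by (simp add: power2_eq_square mult.assoc)
    qed
    ultimately show "\<exists>y. (\<psi> has_real_derivative y) (at t) \<and> y \<le> 0"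
      by (intro exI conjI) auto
  qed simp
  then show ?thesis
    by (simp add: \<psi>_def d_def)
qed

lemma convex_smooth_interpolation:
  fixes h :: "'a::real_inner \<Rightarrow> real"
  assumes convex: "convex_on UNIV h"
    and deriv: "\<And>z. (h has_derivative (\<lambda>w. dh z \<bullet> w)) (at z)"
    and upper: "\<And>u v. h u \<le> h v + dh v \<bullet> (u - v) + M / 2 * (norm (u - v))\<^sup>2"
    and M: "0 < M"
  shows "h v + dh v \<bullet> (u - v) + (norm (dh u - dh v))\<^sup>2 / (2 * M) \<le> h u"
proof -
  define p where "p = dh u - dh v"
  define w where "w = u - (1 / M) *\<^sub>R p"
  have "h v + dh v \<bullet> (w - v) \<le> h u + dh u \<bullet> (w - u) + M / 2 * (norm (w - u))\<^sup>2"
    using convex_on_gradient_inequality[OF convex deriv, of v w] upper[of w u] by linarith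
  moreover have "dh u \<bullet> (w - u) - dh v \<bullet> (w - v) = - (p \<bullet> p) / M - dh v \<bullet> (u - v)"
    using M by (simp add: w_def p_def inner_diff_left inner_diff_right algebra_simps; simp add: field_simps)
  moreover have "M / 2 * (norm (w - u))\<^sup>2 = (p \<bullet> p) / (2 * M)"
    using M by (simp add: w_def power2_eq_square flip: power2_norm_eq_inner)
  ultimately show ?thesis
    by (simp add: p_def power2_norm_eq_inner field_simps)
qed

lemma convex_on_norm_power2: "convex_on UNIV (\<lambda>x::'a::real_inner. (norm x)\<^sup>2)"
proof (rule convex_onI)
  fix t :: real and a b :: 'a
  assume t: "0 < t" "t < 1"
  have "(1 - t) * (norm a)\<^sup>2 + t * (norm b)\<^sup>2 - (norm ((1 - t) *\<^sub>R a + t *\<^sub>R b))\<^sup>2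
      = t * (1 - t) * (norm (a - b))\<^sup>2"
    unfolding power2_norm_eq_inner
    by (simp only: inner_add_left inner_add_right inner_diff_left inner_diff_right inner_scaleR_left
        inner_scaleR_right inner_commute[of G D] inner_commute[of H D] inner_commute[of X D]
        inner_commute[of H G] inner_commute[of X G] inner_commute[of H X]) algebra
  moreover have "0 \<le> t * (1 - t) * (norm (a - b))\<^sup>2"
    using t by simp
  ultimately show "(norm ((1 - t) *\<^sub>R a + t *\<^sub>R b))\<^sup>2 \<le> (1 - t) * (norm a)\<^sup>2 + t * (norm b)\<^sup>2"
    by linarith
qed auto

lemma strongly_convex_imp_convex:
  assumes "strongly_convex \<mu> f" and "0 \<le> \<mu>"
  shows "convex_on UNIV f"
proof -
  have "convex_on UNIV (\<lambda>x. (f x - \<mu> / 2 * (norm x)\<^sup>2) + \<mu> / 2 * (norm x)\<^sup>2)"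
    using assms convex_on_norm_power2
    by (intro convex_on_add convex_on_cmul) (auto simp: strongly_convex_def)
  then show ?thesis
    by simp
qed

lemma strongly_convex_smooth_interpolation:
  fixes f :: "'a::real_inner \<Rightarrow> real"
  assumes grad: "\<And>z. (f has_derivative (\<lambda>h. grad z \<bullet> h)) (at z)"
    and sc: "strongly_convex \<mu> f"
    and lip: "\<And>u v. norm (grad u - grad v) \<le> L * norm (u - v)"
    and mu_L: "\<mu> < L"
  shows "f v + grad v \<bullet> (u - v) + (norm (grad u - grad v - \<mu> *\<^sub>R (u - v)))\<^sup>2 / (2 * (L - \<mu>))
      + \<mu> / 2 * (norm (u - v))\<^sup>2 \<le> f u"
proof -
  define h where "h = (\<lambda>x. f x - \<mu> / 2 * (norm x)\<^sup>2)"
  define dh where "dh x = grad x - \<mu> *\<^sub>R x" for x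
  have h_sq: "h u - h v - dh v \<bullet> (u - v) = f u - f v - grad v \<bullet> (u - v) - \<mu> / 2 * (norm (u - v))\<^sup>2"
    for u v
    by (simp add: h_def dh_def power2_norm_eq_inner inner_diff_left inner_diff_right inner_commute
        algebra_simps)
  have "convex_on UNIV h"
    using sc unfolding strongly_convex_def h_def .
  moreover have "(h has_derivative (\<lambda>w. dh z \<bullet> w)) (at z)" for z
  proof -
    have "(h has_derivative (\<lambda>w. grad z \<bullet> w - \<mu> / 2 * (w \<bullet> z + z \<bullet> w))) (at z)"
      unfolding h_def power2_norm_eq_inner by (auto intro!: derivative_eq_intros grad)
    then show ?thesis
      by (simp add: dh_def inner_diff_left inner_commute algebra_simps)
  qed
  moreover have "h u \<le> h v + dh v \<bullet> (u - v) + (L - \<mu>) / 2 * (norm (u - v))\<^sup>2" for u v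
  proof -
    have "(L - \<mu>) / 2 * (norm (u - v))\<^sup>2 = L / 2 * (norm (u - v))\<^sup>2 - \<mu> / 2 * (norm (u - v))\<^sup>2"
      by (simp add: field_simps)
    then show ?thesis
      using lipschitz_gradient_upper_bound[OF grad lip, of u v] h_sq[of u v] by linarith
  qed
  ultimately have "h v + dh v \<bullet> (u - v) + (norm (dh u - dh v))\<^sup>2 / (2 * (L - \<mu>)) \<le> h u"
    using mu_L by (intro convex_smooth_interpolation) auto
  moreover have "dh u - dh v = grad u - grad v - \<mu> *\<^sub>R (u - v)"
    by (simp add: dh_def algebra_simps)
  ultimately show ?thesis
    using h_sq[of u v] by simp
qed

lemma gradient_zero_at_minimizer:
  assumes "(f has_derivative (\<lambda>h. g \<bullet> h)) (at z)" and "\<And>w. f z \<le> f w"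
  shows "g = 0"
proof -
  have "(\<lambda>h. g \<bullet> h) = (\<lambda>h. 0)"
    using assms by (intro differential_zero_maxmin[of z UNIV f]) auto
  then have "g \<bullet> g = 0"
    by metis
  then show ?thesis
    by simp
qed

(* Each hypothesis says that in the difference of the two sides the coefficient of one Gram
  entry (in the order D.D, D.G, D.H, D.X, G.G, G.H, H.H, X.H, X.X) or of fx' vanishes. *)
lemma sc_ogm_gram_identity:
  fixes D X G H :: "'a::real_inner"
  assumes "- a*a*m2 + c*c*hM*m*m*rho + c*c*m2*rho - k1 + m2*rho = 0"
    and "2*c*hM*iL*m*m*rho - 2*c*hM*m*rho + 2*c*iL*m2*rho = 0"
    and "-2*a*b*m2 + 2*c*hM*m*rho + c*rho - 2*k1*k2 = 0"
    and "2*a*m2 - 2*m2*rho = 0"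
    and "- hL*rho + hM*iL*iL*m*m*rho - 2*hM*iL*m*rho + hM*rho + iL*iL*m2*rho = 0"
    and "2*hM*iL*m*rho - 2*hM*rho + iL*rho = 0"
    and "- b*b*m2 + c*hM + hL + hM*rho - k1*k2*k2 - k3*k4*k4 - k5 = 0"
    and "2*b*m2 - c - 2*c*hM*m + 2*k3*k4 = 0"
    and "c*hM*m*m + c*m2 - k3 - m2 + m2*rho = 0"
    and "-1 + c + rho = 0"
  shows "rho*(fx - hL*(norm G)\<^sup>2 + m2*(norm (X - D))\<^sup>2)
      - (fx' - hL*(norm H)\<^sup>2 + m2*(norm (X - a *\<^sub>R D - b *\<^sub>R H))\<^sup>2)
    = rho*(fx - fx' - H \<bullet> (c *\<^sub>R D + iL *\<^sub>R G)
         - hM*(norm (G - H - m *\<^sub>R (c *\<^sub>R D + iL *\<^sub>R G)))\<^sup>2 - m2*(norm (c *\<^sub>R D + iL *\<^sub>R G))\<^sup>2)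
    + c*(- fx' + H \<bullet> X - hM*(norm (H - m *\<^sub>R X))\<^sup>2 - m2*(norm X)\<^sup>2)
    + (k1*(norm (D + k2 *\<^sub>R H))\<^sup>2 + k3*(norm (X - k4 *\<^sub>R H))\<^sup>2 + k5*(norm H)\<^sup>2)"
proof -
  have "rho*(fx - hL*(norm G)\<^sup>2 + m2*(norm (X - D))\<^sup>2)
      - (fx' - hL*(norm H)\<^sup>2 + m2*(norm (X - a *\<^sub>R D - b *\<^sub>R H))\<^sup>2)
    - (rho*(fx - fx' - H \<bullet> (c *\<^sub>R D + iL *\<^sub>R G)
         - hM*(norm (G - H - m *\<^sub>R (c *\<^sub>R D + iL *\<^sub>R G)))\<^sup>2 - m2*(norm (c *\<^sub>R D + iL *\<^sub>R G))\<^sup>2)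
    + c*(- fx' + H \<bullet> X - hM*(norm (H - m *\<^sub>R X))\<^sup>2 - m2*(norm X)\<^sup>2)
    + (k1*(norm (D + k2 *\<^sub>R H))\<^sup>2 + k3*(norm (X - k4 *\<^sub>R H))\<^sup>2 + k5*(norm H)\<^sup>2))
    = (D \<bullet> D) * (- a*a*m2 + c*c*hM*m*m*rho + c*c*m2*rho - k1 + m2*rho)
    + (D \<bullet> G) * (2*c*hM*iL*m*m*rho - 2*c*hM*m*rho + 2*c*iL*m2*rho)
    + (D \<bullet> H) * (-2*a*b*m2 + 2*c*hM*m*rho + c*rho - 2*k1*k2)
    + (D \<bullet> X) * (2*a*m2 - 2*m2*rho)
    + (G \<bullet> G) * (- hL*rho + hM*iL*iL*m*m*rho - 2*hM*iL*m*rho + hM*rho + iL*iL*m2*rho)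
    + (G \<bullet> H) * (2*hM*iL*m*rho - 2*hM*rho + iL*rho)
    + (H \<bullet> H) * (- b*b*m2 + c*hM + hL + hM*rho - k1*k2*k2 - k3*k4*k4 - k5)
    + (X \<bullet> H) * (2*b*m2 - c - 2*c*hM*m + 2*k3*k4)
    + (X \<bullet> X) * (c*hM*m*m + c*m2 - k3 - m2 + m2*rho)
    + fx' * (-1 + c + rho)"
    unfolding power2_norm_eq_inner
    by (simp only: inner_add_left inner_add_right inner_diff_left inner_diff_right inner_scaleR_left
        inner_scaleR_right inner_commute[of G D] inner_commute[of H D] inner_commute[of X D]
        inner_commute[of H G] inner_commute[of X G] inner_commute[of H X]) algebra
  then show ?thesis
    using assms by simp
qed

(* In the application D = x (k+1) - z (k+1) and X = x (k+1) - xs, G and H are the gradients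
  at x k and x (k+1), and fx, fx' are f (x k) - f xs and f (x (k+1)) - f xs. *)
lemma sc_ogm_certificate:
  fixes D X G H :: "'a::real_inner" and \<gamma> L \<mu> :: real
  assumes \<gamma>: "0 < \<gamma>" and L: "0 < L" and \<mu>: "\<mu> * ((1 + \<gamma>) * (2 + \<gamma>)) = L * \<gamma>\<^sup>2"
  shows "\<exists>s\<ge>0. 1 / (1 + \<gamma>) * (fx - 1 / (2 * L) * (norm G)\<^sup>2 + \<mu> / 2 * (norm (X - D))\<^sup>2)
      - (fx' - 1 / (2 * L) * (norm H)\<^sup>2
         + \<mu> / 2 * (norm (X - (1 / (1 + \<gamma>)) *\<^sub>R D - (\<gamma> / ((1 + \<gamma>) * \<mu>)) *\<^sub>R H))\<^sup>2)
    = 1 / (1 + \<gamma>) * (fx - fx' - H \<bullet> ((\<gamma> / (1 + \<gamma>)) *\<^sub>R D + (1 / L) *\<^sub>R G)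
          - 1 / (2 * (L - \<mu>)) * (norm (G - H - \<mu> *\<^sub>R ((\<gamma> / (1 + \<gamma>)) *\<^sub>R D + (1 / L) *\<^sub>R G)))\<^sup>2
          - \<mu> / 2 * (norm ((\<gamma> / (1 + \<gamma>)) *\<^sub>R D + (1 / L) *\<^sub>R G))\<^sup>2)
      + \<gamma> / (1 + \<gamma>) * (- fx' + H \<bullet> X - 1 / (2 * (L - \<mu>)) * (norm (H - \<mu> *\<^sub>R X))\<^sup>2
          - \<mu> / 2 * (norm X)\<^sup>2)
      + s"
proof -
  (* field_simps can only clear denominators it proves nonzero, which fails once products like
    (1 + \<gamma>) * (2 + \<gamma>) are multiplied out; so the linear factors are kept as atoms. *)
  define p q t w where "p = 1 + \<gamma>" and "q = 2 + \<gamma>" and "t = 3 * \<gamma> + 2" and "w = \<gamma>\<^sup>2 + 5 * \<gamma> + 2"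
  have pos: "0 < p" "0 < q" "0 < t" "0 < w"
    using \<gamma> by (auto simp: p_def q_def t_def w_def intro!: add_nonneg_pos)
  have \<mu>_eq: "\<mu> = L * \<gamma>\<^sup>2 / (p * q)"
    using pos \<mu> by (simp add: p_def q_def eq_divide_eq)
  have "(L - \<mu>) * (p * q) = L * t"
    unfolding left_diff_distrib \<mu>[folded p_def q_def]
    by (simp add: p_def q_def t_def algebra_simps power2_eq_square)
  then have L_minus_\<mu>: "L - \<mu> = L * t / (p * q)"
    using pos by (simp add: eq_divide_eq)
  note atoms = p_def[symmetric] q_def[symmetric] t_def[symmetric] w_def[symmetric]
  show ?thesis
  proof (intro exI conjI)
    show "0 \<le> L * \<gamma> ^ 3 * w / (2 * q * p ^ 3 * t) * (norm (D + (q * p / (w * L)) *\<^sub>R H))\<^sup>2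
        + L * \<gamma> ^ 5 / (2 * q * p\<^sup>2 * t) * (norm (X - (1 / \<mu>) *\<^sub>R H))\<^sup>2
        + \<gamma>\<^sup>2 / (2 * p * w * L) * (norm H)\<^sup>2"
      using \<gamma> L pos by simp
    show "1 / (1 + \<gamma>) * (fx - 1 / (2 * L) * (norm G)\<^sup>2 + \<mu> / 2 * (norm (X - D))\<^sup>2)
      - (fx' - 1 / (2 * L) * (norm H)\<^sup>2
         + \<mu> / 2 * (norm (X - (1 / (1 + \<gamma>)) *\<^sub>R D - (\<gamma> / ((1 + \<gamma>) * \<mu>)) *\<^sub>R H))\<^sup>2)
      = 1 / (1 + \<gamma>) * (fx - fx' - H \<bullet> ((\<gamma> / (1 + \<gamma>)) *\<^sub>R D + (1 / L) *\<^sub>R G)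
          - 1 / (2 * (L - \<mu>)) * (norm (G - H - \<mu> *\<^sub>R ((\<gamma> / (1 + \<gamma>)) *\<^sub>R D + (1 / L) *\<^sub>R G)))\<^sup>2
          - \<mu> / 2 * (norm ((\<gamma> / (1 + \<gamma>)) *\<^sub>R D + (1 / L) *\<^sub>R G))\<^sup>2)
      + \<gamma> / (1 + \<gamma>) * (- fx' + H \<bullet> X - 1 / (2 * (L - \<mu>)) * (norm (H - \<mu> *\<^sub>R X))\<^sup>2
          - \<mu> / 2 * (norm X)\<^sup>2)
      + (L * \<gamma> ^ 3 * w / (2 * q * p ^ 3 * t) * (norm (D + (q * p / (w * L)) *\<^sub>R H))\<^sup>2
        + L * \<gamma> ^ 5 / (2 * q * p\<^sup>2 * t) * (norm (X - (1 / \<mu>) *\<^sub>R H))\<^sup>2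
        + \<gamma>\<^sup>2 / (2 * p * w * L) * (norm H)\<^sup>2)"
      by (rule sc_ogm_gram_identity; (unfold atoms)?; (unfold L_minus_\<mu>)?; (unfold \<mu>_eq)?;
          insert pos \<gamma> L; simp add: field_simps; unfold p_def q_def t_def w_def;
          (algebra | simp add: algebra_simps power2_eq_square power3_eq_cube eval_nat_numeral))
  qed
qed

lemma sc_ogm_lyapunov_contraction:
  fixes x x' z z' xs G H :: "'a::real_inner" and \<gamma> L \<mu> :: real
  assumes \<gamma>: "0 < \<gamma>" and L: "0 < L" and \<mu>: "\<mu> * ((1 + \<gamma>) * (2 + \<gamma>)) = L * \<gamma>\<^sup>2"
    and x: "x - x' = (\<gamma> / (1 + \<gamma>)) *\<^sub>R (x' - z) + (1 / L) *\<^sub>R G"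
    and z': "z' = x' - (1 / (1 + \<gamma>)) *\<^sub>R (x' - z) - (\<gamma> / ((1 + \<gamma>) * \<mu>)) *\<^sub>R H"
    and interpolation_x: "fx' + H \<bullet> (x - x') + (norm (G - H - \<mu> *\<^sub>R (x - x')))\<^sup>2 / (2 * (L - \<mu>))
      + \<mu> / 2 * (norm (x - x'))\<^sup>2 \<le> fx"
    and interpolation_xs: "fx' + H \<bullet> (xs - x') + (norm (0 - H - \<mu> *\<^sub>R (xs - x')))\<^sup>2 / (2 * (L - \<mu>))
      + \<mu> / 2 * (norm (xs - x'))\<^sup>2 \<le> fs"
  shows "fx' - fs - (norm H)\<^sup>2 / (2 * L) + \<mu> / 2 * (norm (z' - xs))\<^sup>2
    \<le> (fx - fs - (norm G)\<^sup>2 / (2 * L) + \<mu> / 2 * (norm (z - xs))\<^sup>2) / (1 + \<gamma>)"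
proof -
  define D X where "D = x' - z" and "X = x' - xs"
  have points: "(\<gamma> / (1 + \<gamma>)) *\<^sub>R D + (1 / L) *\<^sub>R G = x - x'" "X - D = z - xs"
      "X - (1 / (1 + \<gamma>)) *\<^sub>R D - (\<gamma> / ((1 + \<gamma>) * \<mu>)) *\<^sub>R H = z' - xs"
    using x by (simp_all add: D_def X_def z' algebra_simps)
  obtain sos where sos: "0 \<le> sos" and identity:
    "1 / (1 + \<gamma>) * (fx - fs - 1 / (2 * L) * (norm G)\<^sup>2 + \<mu> / 2 * (norm (z - xs))\<^sup>2)
      - (fx' - fs - 1 / (2 * L) * (norm H)\<^sup>2 + \<mu> / 2 * (norm (z' - xs))\<^sup>2)
    = 1 / (1 + \<gamma>) * (fx - fs - (fx' - fs) - H \<bullet> (x - x')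
          - 1 / (2 * (L - \<mu>)) * (norm (G - H - \<mu> *\<^sub>R (x - x')))\<^sup>2 - \<mu> / 2 * (norm (x - x'))\<^sup>2)
      + \<gamma> / (1 + \<gamma>) * (- (fx' - fs) + H \<bullet> X
          - 1 / (2 * (L - \<mu>)) * (norm (H - \<mu> *\<^sub>R X))\<^sup>2 - \<mu> / 2 * (norm X)\<^sup>2)
      + sos"
    using sc_ogm_certificate[OF \<gamma> L \<mu>, where D = D and X = X and G = G and H = H
      and fx = "fx - fs" and fx' = "fx' - fs", unfolded points] by blast
  have "0 \<le> 1 / (1 + \<gamma>) * (fx - fs - (fx' - fs) - H \<bullet> (x - x')
      - 1 / (2 * (L - \<mu>)) * (norm (G - H - \<mu> *\<^sub>R (x - x')))\<^sup>2 - \<mu> / 2 * (norm (x - x'))\<^sup>2)"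
    using interpolation_x \<gamma> by simp
  moreover have "0 \<le> \<gamma> / (1 + \<gamma>) * (- (fx' - fs) + H \<bullet> X
      - 1 / (2 * (L - \<mu>)) * (norm (H - \<mu> *\<^sub>R X))\<^sup>2 - \<mu> / 2 * (norm X)\<^sup>2)"
  proof -
    have "norm (0 - H - \<mu> *\<^sub>R (xs - x')) = norm (H - \<mu> *\<^sub>R X)"
      using norm_minus_cancel[of "H - \<mu> *\<^sub>R X"] by (simp add: X_def algebra_simps)
    moreover have "H \<bullet> (xs - x') = - (H \<bullet> X)" and "norm (xs - x') = norm X"
      by (simp_all add: X_def inner_diff_right norm_minus_commute)
    ultimately show ?thesis
      using interpolation_xs \<gamma> by simp
  qed
  ultimately have "fx' - fs - 1 / (2 * L) * (norm H)\<^sup>2 + \<mu> / 2 * (norm (z' - xs))\<^sup>2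
      \<le> 1 / (1 + \<gamma>) * (fx - fs - 1 / (2 * L) * (norm G)\<^sup>2 + \<mu> / 2 * (norm (z - xs))\<^sup>2)"
    using identity sos by linarith
  then show ?thesis
    by simp
qed

definition sc_ogm_aux :: "('a::real_inner \<Rightarrow> 'a) \<Rightarrow> real \<Rightarrow> real \<Rightarrow> (nat \<Rightarrow> 'a) \<Rightarrow> nat \<Rightarrow> 'a" where
  "sc_ogm_aux grad \<mu> \<gamma> x = rec_nat (x 0)
    (\<lambda>k z. (1 / (1 + \<gamma>)) *\<^sub>R z + (\<gamma> / (1 + \<gamma>)) *\<^sub>R (x k - (1 / \<mu>) *\<^sub>R grad (x k)))"

lemma sc_ogm_aux_simps [simp]:
  "sc_ogm_aux grad \<mu> \<gamma> x 0 = x 0"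
  "sc_ogm_aux grad \<mu> \<gamma> x (Suc k) = (1 / (1 + \<gamma>)) *\<^sub>R sc_ogm_aux grad \<mu> \<gamma> x k
    + (\<gamma> / (1 + \<gamma>)) *\<^sub>R (x k - (1 / \<mu>) *\<^sub>R grad (x k))"
  by (simp_all add: sc_ogm_aux_def)

definition sc_ogm_lyapunov ::
    "('a::real_inner \<Rightarrow> real) \<Rightarrow> ('a \<Rightarrow> 'a) \<Rightarrow> real \<Rightarrow> real \<Rightarrow> real \<Rightarrow> 'a \<Rightarrow> (nat \<Rightarrow> 'a) \<Rightarrow> nat \<Rightarrow> real"
  where "sc_ogm_lyapunov f grad \<mu> L \<gamma> xs x k = f (x k) - f xs - (norm (grad (x k)))\<^sup>2 / (2 * L)
    + \<mu> / 2 * (norm (sc_ogm_aux grad \<mu> \<gamma> x (Suc k) - xs))\<^sup>2"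

lemma sc_ogm_coupling:
  fixes x y :: "nat \<Rightarrow> 'a::real_inner"
  assumes \<gamma>: "0 < \<gamma>" and L: "0 < L" and \<mu>_pos: "0 < \<mu>"
    and \<mu>: "\<mu> * ((1 + \<gamma>) * (2 + \<gamma>)) = L * \<gamma>\<^sup>2"
    and y_0: "y 0 = x 0"
    and y_step: "\<And>k. y (Suc k) = x k - (1 / L) *\<^sub>R grad (x k)"
    and x_step: "\<And>k. x (Suc k) = y (Suc k) + (1 / (2 * \<gamma> + 1)) *\<^sub>R (y (Suc k) - y k)
        + (1 / (2 * \<gamma> + 1)) *\<^sub>R (y (Suc k) - x k)"
  shows "(\<gamma> / (1 + \<gamma>)) *\<^sub>R (x k - sc_ogm_aux grad \<mu> \<gamma> x k) = y k - x k"
proof (induction k)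
  case 0
  then show ?case
    by (simp add: y_0)
next
  case (Suc k)
  have "((1 + \<gamma>) / \<gamma>) *\<^sub>R (y k - x k) = x k - sc_ogm_aux grad \<mu> \<gamma> x k"
    unfolding Suc.IH[symmetric] using \<gamma> by simp
  then have z_k: "sc_ogm_aux grad \<mu> \<gamma> x k = x k - ((1 + \<gamma>) / \<gamma>) *\<^sub>R (y k - x k)"
    by simp
  have inverses: "inverse (2 * \<gamma> + 1) * (2 * \<gamma> + 1) = 1" "inverse (1 + \<gamma>) * (1 + \<gamma>) = 1"
    "inverse \<gamma> * \<gamma> = 1" "inverse L * L = 1" "inverse \<mu> * (L * \<gamma>\<^sup>2) = (1 + \<gamma>) * (2 + \<gamma>)"
    using \<gamma> L \<mu>_pos by (simp_all flip: \<mu>)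
  (* Testing against an arbitrary w gives a scalar identity; with the inverses as atoms it is
    an ideal membership problem, which algebra decides. *)
  show ?case
  proof (rule vector_eq_rdot[THEN iffD1], intro allI)
    fix w
    show "((\<gamma> / (1 + \<gamma>)) *\<^sub>R (x (Suc k) - sc_ogm_aux grad \<mu> \<gamma> x (Suc k))) \<bullet> w
        = (y (Suc k) - x (Suc k)) \<bullet> w"
      using inverses unfolding x_step sc_ogm_aux_simps y_step z_k
      by (simp only: inner_add_left inner_diff_left inner_scaleR_left divide_inverse mult_1 mult_1_right) algebra
  qed
qed

lemma sc_ogm_lyapunov_decrease:
  fixes f :: "'a::real_inner \<Rightarrow> real"
  assumes grad: "\<And>z. (f has_derivative (\<lambda>h. grad z \<bullet> h)) (at z)"
    and sc: "strongly_convex \<mu> f"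
    and lip: "\<And>u v. norm (grad u - grad v) \<le> L * norm (u - v)"
    and \<mu>_pos: "0 < \<mu>" and \<mu>_L: "\<mu> < L"
    and xs_min: "\<And>z. f xs \<le> f z"
    and \<gamma>: "0 < \<gamma>" and \<mu>: "\<mu> * ((1 + \<gamma>) * (2 + \<gamma>)) = L * \<gamma>\<^sup>2"
    and y_0: "y 0 = x 0"
    and y_step: "\<And>k. y (Suc k) = x k - (1 / L) *\<^sub>R grad (x k)"
    and x_step: "\<And>k. x (Suc k) = y (Suc k) + (1 / (2 * \<gamma> + 1)) *\<^sub>R (y (Suc k) - y k)
        + (1 / (2 * \<gamma> + 1)) *\<^sub>R (y (Suc k) - x k)"
  shows "sc_ogm_lyapunov f grad \<mu> L \<gamma> xs x (Suc k) \<le> sc_ogm_lyapunov f grad \<mu> L \<gamma> xs x k / (1 + \<gamma>)"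
proof -
  define z where "z = sc_ogm_aux grad \<mu> \<gamma> x"
  have L: "0 < L"
    using \<mu>_pos \<mu>_L by linarith
  have x_diff: "x k - x (Suc k) = (\<gamma> / (1 + \<gamma>)) *\<^sub>R (x (Suc k) - z (Suc k)) + (1 / L) *\<^sub>R grad (x k)"
    using sc_ogm_coupling[OF \<gamma> L \<mu>_pos \<mu> y_0 y_step x_step, of "Suc k"] by (simp add: z_def y_step)
  have z_next: "z (Suc (Suc k)) = x (Suc k) - (1 / (1 + \<gamma>)) *\<^sub>R (x (Suc k) - z (Suc k))
      - (\<gamma> / ((1 + \<gamma>) * \<mu>)) *\<^sub>R grad (x (Suc k))"
  proof (rule vector_eq_rdot[THEN iffD1], intro allI)
    fix w
    show "z (Suc (Suc k)) \<bullet> w = (x (Suc k) - (1 / (1 + \<gamma>)) *\<^sub>R (x (Suc k) - z (Suc k))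
      - (\<gamma> / ((1 + \<gamma>) * \<mu>)) *\<^sub>R grad (x (Suc k))) \<bullet> w"
      using \<gamma> \<mu>_pos by (simp add: z_def inner_add_left inner_diff_left field_simps)
  qed
  have "grad xs = 0"
    using grad xs_min by (rule gradient_zero_at_minimizer)
  note interpolation = strongly_convex_smooth_interpolation[OF grad sc lip \<mu>_L]
  show ?thesis
    unfolding sc_ogm_lyapunov_def z_def[symmetric]
    by (rule sc_ogm_lyapunov_contraction[OF \<gamma> L \<mu> x_diff z_next interpolation
          interpolation[where u = xs, unfolded \<open>grad xs = 0\<close>]])
qed

lemma geometric_decay:
  fixes \<Phi> :: "nat \<Rightarrow> real"
  assumes step: "\<And>k. \<Phi> (Suc k) \<le> \<Phi> k / c" and c: "0 < c"
  shows "\<Phi> k \<le> \<Phi> 0 / c ^ k"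
proof (induction k)
  case 0
  then show ?case
    by simp
next
  case (Suc k)
  have "\<Phi> (Suc k) \<le> \<Phi> k / c"
    by (rule step)
  also have "\<dots> \<le> \<Phi> 0 / c ^ k / c"
    by (rule divide_right_mono) (use Suc.IH c in auto)
  finally show ?case
    by (simp add: mult.commute)
qed

lemma convex_smooth_suboptimality:
  fixes f :: "'a::real_inner \<Rightarrow> real"
  assumes grad: "\<And>z. (f has_derivative (\<lambda>h. grad z \<bullet> h)) (at z)"
    and sc: "strongly_convex \<mu> f"
    and lip: "\<And>u v. norm (grad u - grad v) \<le> L * norm (u - v)"
    and \<mu>: "0 \<le> \<mu>" and L: "0 < L"
    and xs_min: "\<And>z. f xs \<le> f z"
  shows "f u - f xs \<le> grad u \<bullet> (u - xs) - (norm (grad u))\<^sup>2 / (2 * L)"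
proof -
  have "f u + grad u \<bullet> (xs - u) + (norm (grad xs - grad u))\<^sup>2 / (2 * L) \<le> f xs"
    using strongly_convex_imp_convex[OF sc \<mu>] grad lipschitz_gradient_upper_bound[OF grad lip] L
    by (rule convex_smooth_interpolation)
  moreover have "grad xs = 0"
    using grad xs_min by (rule gradient_zero_at_minimizer)
  ultimately show ?thesis
    by (simp add: inner_diff_right)
qed

lemma sc_ogm_aux_1:
  assumes "0 < \<gamma>"
  shows "sc_ogm_aux grad \<mu> \<gamma> x 1 = x 0 - (\<gamma> / ((1 + \<gamma>) * \<mu>)) *\<^sub>R grad (x 0)"
proof (rule vector_eq_rdot[THEN iffD1], intro allI)
  fix w
  have "inverse (1 + \<gamma>) * (1 + \<gamma>) = 1"
    using assms by simp
  then show "sc_ogm_aux grad \<mu> \<gamma> x 1 \<bullet> w = (x 0 - (\<gamma> / ((1 + \<gamma>) * \<mu>)) *\<^sub>R grad (x 0)) \<bullet> w"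
    by (simp only: One_nat_def sc_ogm_aux_simps inner_add_left inner_diff_left inner_scaleR_left
        divide_inverse inverse_mult_distrib mult_1 mult_1_right) algebra
qed

lemma sc_ogm_aux_1_distance:
  assumes \<gamma>: "0 < \<gamma>" and L: "0 < L" and \<mu>_pos: "0 < \<mu>"
    and \<mu>: "\<mu> * ((1 + \<gamma>) * (2 + \<gamma>)) = L * \<gamma>\<^sup>2"
  shows "\<mu> / 2 * (norm (sc_ogm_aux grad \<mu> \<gamma> x 1 - xs))\<^sup>2 = \<mu> / 2 * (norm (x 0 - xs))\<^sup>2
    - (1 - 1 / (1 + \<gamma>)) * (grad (x 0) \<bullet> (x 0 - xs))
    + (1 + 1 / (1 + \<gamma>)) * (norm (grad (x 0)))\<^sup>2 / (2 * L)"
proof -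
  define \<beta> where "\<beta> = \<gamma> / ((1 + \<gamma>) * \<mu>)"
  have "\<mu> * \<beta> = \<gamma> / (1 + \<gamma>)"
    using \<mu>_pos by (simp add: \<beta>_def)
  then have \<beta>1: "\<mu> * \<beta> = 1 - 1 / (1 + \<gamma>)"
    using \<gamma> by (simp add: field_simps)
  have "(1 + \<gamma>) * \<mu> = L * \<gamma>\<^sup>2 / (2 + \<gamma>)"
    using \<mu> \<gamma> by (simp add: eq_divide_eq ac_simps)
  moreover have "\<mu> * \<beta>\<^sup>2 = \<gamma>\<^sup>2 / ((1 + \<gamma>) * ((1 + \<gamma>) * \<mu>))"
    using \<mu>_pos by (simp add: \<beta>_def power2_eq_square)
  ultimately have "\<mu> * \<beta>\<^sup>2 = (2 + \<gamma>) / ((1 + \<gamma>) * L)"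
    using \<gamma> L by (simp add: power2_eq_square)
  then have \<beta>2: "\<mu> * \<beta>\<^sup>2 = (1 + 1 / (1 + \<gamma>)) / L"
    using \<gamma> by (simp add: field_simps)
  have z_1_xs: "sc_ogm_aux grad \<mu> \<gamma> x 1 - xs = (x 0 - xs) - \<beta> *\<^sub>R grad (x 0)"
    unfolding sc_ogm_aux_1[OF \<gamma>] \<beta>_def by simp
  have "\<mu> / 2 * (norm (sc_ogm_aux grad \<mu> \<gamma> x 1 - xs))\<^sup>2 = \<mu> / 2 * (norm (x 0 - xs))\<^sup>2
      - (\<mu> * \<beta>) * (grad (x 0) \<bullet> (x 0 - xs)) + (\<mu> * \<beta>\<^sup>2) / 2 * (norm (grad (x 0)))\<^sup>2"
    unfolding z_1_xs power2_norm_eq_inner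
    by (simp add: inner_diff_left inner_diff_right inner_commute algebra_simps power2_eq_square)
  then show ?thesis
    unfolding \<beta>1 \<beta>2 by simp
qed

lemma sc_ogm_lyapunov_initial:
  fixes f :: "'a::real_inner \<Rightarrow> real"
  assumes grad: "\<And>z. (f has_derivative (\<lambda>h. grad z \<bullet> h)) (at z)"
    and sc: "strongly_convex \<mu> f"
    and lip: "\<And>u v. norm (grad u - grad v) \<le> L * norm (u - v)"
    and \<mu>_pos: "0 < \<mu>" and L: "0 < L"
    and xs_min: "\<And>z. f xs \<le> f z"
    and \<gamma>: "0 < \<gamma>" and \<mu>: "\<mu> * ((1 + \<gamma>) * (2 + \<gamma>)) = L * \<gamma>\<^sup>2"
  shows "sc_ogm_lyapunov f grad \<mu> L \<gamma> xs x 0 \<le> (L + \<mu> / 2) * (norm (x 0 - xs))\<^sup>2"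
proof -
  define E g r where "E = x 0 - xs" and "g = grad (x 0)" and "r = 1 / (1 + \<gamma>)"
  have r: "0 \<le> r" "r \<le> 1"
    using \<gamma> by (simp_all add: r_def)
  have "grad xs = 0"
    using grad xs_min by (rule gradient_zero_at_minimizer)
  have "g \<bullet> E \<le> norm g * norm E"
    by (rule norm_cauchy_schwarz)
  also have "\<dots> \<le> L * norm E * norm E"
    using lip[of "x 0" xs] \<open>grad xs = 0\<close> by (intro mult_right_mono) (simp_all add: g_def E_def)
  finally have "r * (g \<bullet> E) \<le> r * (L * (norm E)\<^sup>2)"
    using r by (intro mult_left_mono) (simp_all add: power2_eq_square mult.assoc)
  also have "\<dots> \<le> L * (norm E)\<^sup>2"
    using r L by (intro mult_left_le_one_le) auto
  finally have "r * (g \<bullet> E) \<le> L * (norm E)\<^sup>2" .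
  moreover have "0 \<le> (1 - r) * (norm g)\<^sup>2 / (2 * L)"
    using r L by simp
  moreover have "f (x 0) - f xs \<le> g \<bullet> E - (norm g)\<^sup>2 / (2 * L)"
    using convex_smooth_suboptimality[OF grad sc lip _ L xs_min, of "x 0"] \<mu>_pos
    by (simp add: E_def g_def)
  ultimately show ?thesis
    unfolding sc_ogm_lyapunov_def One_nat_def[symmetric] sc_ogm_aux_1_distance[OF \<gamma> L \<mu>_pos \<mu>]
      r_def[symmetric] g_def[symmetric] E_def[symmetric]
    by (simp add: algebra_simps add_divide_distrib diff_divide_distrib)
qed

lemma sc_ogm_objective_le_lyapunov:
  fixes f :: "'a::real_inner \<Rightarrow> real"
  assumes grad: "\<And>z. (f has_derivative (\<lambda>h. grad z \<bullet> h)) (at z)"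
    and lip: "\<And>u v. norm (grad u - grad v) \<le> L * norm (u - v)"
    and L: "0 < L" and \<mu>: "0 \<le> \<mu>"
    and y_step: "y (Suc k) = x k - (1 / L) *\<^sub>R grad (x k)"
  shows "f (y (Suc k)) - f xs \<le> sc_ogm_lyapunov f grad \<mu> L \<gamma> xs x k"
proof -
  have step: "y (Suc k) - x k = - ((1 / L) *\<^sub>R grad (x k))"
    by (simp add: y_step)
  have "grad (x k) \<bullet> (y (Suc k) - x k) + L / 2 * (norm (y (Suc k) - x k))\<^sup>2
      = - (norm (grad (x k)))\<^sup>2 / (2 * L)"
    unfolding step power2_norm_eq_inner using L by (simp add: field_simps power2_eq_square)
  moreover have "0 \<le> \<mu> / 2 * (norm (sc_ogm_aux grad \<mu> \<gamma> x (Suc k) - xs))\<^sup>2"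
    using \<mu> by simp
  ultimately show ?thesis
    using lipschitz_gradient_upper_bound[OF grad lip, of "y (Suc k)" "x k"]
    unfolding sc_ogm_lyapunov_def by linarith
qed

theorem sc_ogm_convergence_rate:
  fixes f :: "'a::real_inner \<Rightarrow> real"
  assumes grad: "\<And>z. (f has_derivative (\<lambda>h. grad z \<bullet> h)) (at z)"
    and sc: "strongly_convex \<mu> f"
    and lip: "\<And>u v. norm (grad u - grad v) \<le> L * norm (u - v)"
    and \<mu>_pos: "0 < \<mu>" and \<mu>_L: "\<mu> < L"
    and xs_min: "\<And>z. f xs \<le> f z"
    and \<gamma>: "0 < \<gamma>" and \<mu>: "\<mu> * ((1 + \<gamma>) * (2 + \<gamma>)) = L * \<gamma>\<^sup>2"
    and y_0: "y 0 = x 0"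
    and y_step: "\<And>k. y (Suc k) = x k - (1 / L) *\<^sub>R grad (x k)"
    and x_step: "\<And>k. x (Suc k) = y (Suc k) + (1 / (2 * \<gamma> + 1)) *\<^sub>R (y (Suc k) - y k)
        + (1 / (2 * \<gamma> + 1)) *\<^sub>R (y (Suc k) - x k)"
    and k: "1 \<le> k"
  shows "f (y k) - f xs \<le> (1 + \<gamma>) powr (- real k + 1) * ((\<mu> + 2 * L) / 2) * (norm (x 0 - xs))\<^sup>2"
proof -
  obtain j where k: "k = Suc j"
    using k by (cases k) auto
  have L: "0 < L"
    using \<mu>_pos \<mu>_L by linarith
  let ?\<Phi> = "sc_ogm_lyapunov f grad \<mu> L \<gamma> xs x"
  have "f (y k) - f xs \<le> ?\<Phi> j"
    unfolding k by (rule sc_ogm_objective_le_lyapunov[OF grad lip L less_imp_le[OF \<mu>_pos]]) (rule y_step)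
  also have "\<dots> \<le> ?\<Phi> 0 / (1 + \<gamma>) ^ j"
    using sc_ogm_lyapunov_decrease[OF grad sc lip \<mu>_pos \<mu>_L xs_min \<gamma> \<mu> y_0 y_step x_step] \<gamma>
    by (intro geometric_decay) auto
  also have "\<dots> \<le> (L + \<mu> / 2) * (norm (x 0 - xs))\<^sup>2 / (1 + \<gamma>) ^ j"
    using sc_ogm_lyapunov_initial[OF grad sc lip \<mu>_pos L xs_min \<gamma> \<mu>] \<gamma> by (simp add: divide_right_mono)
  also have "\<dots> = (1 + \<gamma>) powr (- real k + 1) * ((\<mu> + 2 * L) / 2) * (norm (x 0 - xs))\<^sup>2"
    using \<gamma> by (simp add: k powr_minus powr_realpow field_simps)
  finally show ?thesis .
qed

lemma sc_ogm_gamma_root: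
  fixes \<kappa> \<gamma> :: real
  assumes \<kappa>: "1 < \<kappa>" and \<gamma>: "(2 * \<kappa> - 2) * \<gamma> = sqrt (8 * \<kappa> + 1) + 3"
  shows "0 < \<gamma>" and "\<kappa> * \<gamma>\<^sup>2 = (1 + \<gamma>) * (2 + \<gamma>)"
proof -
  have s: "(sqrt (8 * \<kappa> + 1))\<^sup>2 = 8 * \<kappa> + 1" "0 \<le> sqrt (8 * \<kappa> + 1)"
    using \<kappa> by simp_all
  then have "0 < (2 * \<kappa> - 2) * \<gamma>"
    unfolding \<gamma> by linarith
  then show "0 < \<gamma>"
    using \<kappa> by (simp add: zero_less_mult_iff)
  have "(2 * \<kappa> - 2) * (\<kappa> * \<gamma>\<^sup>2 - (1 + \<gamma>) * (2 + \<gamma>)) = 0"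
    using s(1) \<gamma> by algebra
  then show "\<kappa> * \<gamma>\<^sup>2 = (1 + \<gamma>) * (2 + \<gamma>)"
    using \<kappa> by simp
qed

lemma ln_add_one_ge:
  fixes x :: real
  assumes "0 \<le> x"
  shows "2 * x / (2 + x) \<le> ln (1 + x)"
proof -
  define \<phi> where "\<phi> t = ln (1 + t) - 2 * t / (2 + t)" for t :: real
  have "\<phi> 0 \<le> \<phi> x"
  proof (rule DERIV_nonneg_imp_nondecreasing[OF assms])
    fix t :: real
    assume t: "0 \<le> t" "t \<le> x"
    have "(\<phi> has_real_derivative 1 / (1 + t) - 4 / (2 + t)\<^sup>2) (at t)"
      unfolding \<phi>_def using t
      by (auto intro!: derivative_eq_intros simp: power2_eq_square field_simps)
    moreover have "4 / (2 + t)\<^sup>2 \<le> 1 / (1 + t)"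
    proof -
      have "4 * (1 + t) \<le> (2 + t)\<^sup>2"
        by (simp add: power2_eq_square algebra_simps)
      then show ?thesis
        using t by (simp add: field_simps)
    qed
    ultimately show "\<exists>y. (\<phi> has_real_derivative y) (at t) \<and> 0 \<le> y"
      by (intro exI conjI) auto
  qed
  then show ?thesis
    by (simp add: \<phi>_def)
qed

lemma sc_ogm_rate_exponent:
  fixes \<kappa> \<gamma> :: real
  assumes \<gamma>: "0 < \<gamma>" and root: "\<kappa> * \<gamma>\<^sup>2 = (1 + \<gamma>) * (2 + \<gamma>)"
  shows "sqrt 2 / sqrt \<kappa> \<le> ln (1 + \<gamma>)"
proof -
  have "0 < \<kappa> * \<gamma>\<^sup>2"
    using \<gamma> root by simp
  then have \<kappa>: "0 < \<kappa>"
    by (simp add: zero_less_mult_iff)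
  have "2 * (2 + \<gamma>)\<^sup>2 \<le> 4 * (\<kappa> * \<gamma>\<^sup>2)"
    unfolding root using \<gamma> by (simp add: power2_eq_square algebra_simps)
  then have "2 \<le> 4 * (\<kappa> * \<gamma>\<^sup>2) / (2 + \<gamma>)\<^sup>2"
    using \<gamma> by (simp add: pos_le_divide_eq)
  also have "\<dots> = (2 * \<gamma> / (2 + \<gamma>))\<^sup>2 * \<kappa>"
    by (simp add: power_divide power_mult_distrib)
  finally have "2 / \<kappa> \<le> (2 * \<gamma> / (2 + \<gamma>))\<^sup>2"
    using \<kappa> by (rule mult_imp_div_pos_le[rotated])
  then have "sqrt (2 / \<kappa>) \<le> sqrt ((2 * \<gamma> / (2 + \<gamma>))\<^sup>2)"
    by (rule real_sqrt_le_mono)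
  then have "sqrt 2 / sqrt \<kappa> \<le> 2 * \<gamma> / (2 + \<gamma>)"
    using \<gamma> by (simp add: real_sqrt_divide)
  also have "\<dots> \<le> ln (1 + \<gamma>)"
    using \<gamma> by (intro ln_add_one_ge) simp
  finally show ?thesis .
qed

lemma powr_bigo_exp:
  fixes b c C :: real
  assumes b: "0 < b" and c: "c \<le> ln b"
  shows "(\<lambda>k::nat. b powr (- real k + 1) * C) \<in> O(\<lambda>k. exp (- c * real k))"
proof (rule bigoI[where c = "b * \<bar>C\<bar>"], rule always_eventually, rule allI)
  fix k :: nat
  have "b powr (- real k + 1) = b * b powr (- real k)"
    using b by (subst powr_add) (simp add: mult.commute)
  also have "\<dots> = b * exp (- real k * ln b)"
    using b by (simp add: powr_def)
  also have "\<dots> \<le> b * exp (- c * real k)"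
    using b mult_right_mono[OF c, of "real k"] by (simp add: mult.commute)
  finally have "\<bar>C\<bar> * b powr (- real k + 1) \<le> \<bar>C\<bar> * (b * exp (- c * real k))"
    by (rule mult_left_mono) simp
  then show "norm (b powr (- real k + 1) * C) \<le> b * \<bar>C\<bar> * norm (exp (- c * real k))"
    by (simp add: abs_mult mult_ac)
qed

theorem sc_ogm_convergence:
  fixes f :: "'a::real_inner \<Rightarrow> real"
    and \<mu> L :: real
  assumes grad: "\<And>z. (f has_derivative (\<lambda>h. grad z \<bullet> h)) (at z)"
    and sc: "strongly_convex \<mu> f"
    and lip: "\<And>u v. norm (grad u - grad v) \<le> L * norm (u - v)"
    and mu_pos: "0 < \<mu>" and mu_L: "\<mu> < L"
    and xs_min: "\<And>z. f xs \<le> f z"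
    and x_0: "x 0 = x0" and y_0: "y 0 = x0"
    and y_step: "\<And>k. y (Suc k) = x k - (1 / L) *\<^sub>R grad (x k)"
    and x_step: "\<And>k. x (Suc k) = y (Suc k)
        + (1 / (2 * ((sqrt (8 * (L / \<mu>) + 1) + 3) / (2 * (L / \<mu>) - 2)) + 1)) *\<^sub>R (y (Suc k) - y k)
        + (1 / (2 * ((sqrt (8 * (L / \<mu>) + 1) + 3) / (2 * (L / \<mu>) - 2)) + 1)) *\<^sub>R (y (Suc k) - x k)"
  shows "(\<forall>k\<ge>1. f (y k) - f xs \<le>
           (1 + (sqrt (8 * (L / \<mu>) + 1) + 3) / (2 * (L / \<mu>) - 2)) powr (- real k + 1)
             * ((\<mu> + 2 * L) / 2) * (norm (x0 - xs))\<^sup>2)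
       \<and> (\<lambda>k::nat. (1 + (sqrt (8 * (L / \<mu>) + 1) + 3) / (2 * (L / \<mu>) - 2)) powr (- real k + 1)
             * ((\<mu> + 2 * L) / 2) * (norm (x0 - xs))\<^sup>2)
           \<in> O(\<lambda>k. exp (- sqrt 2 * real k / sqrt (L / \<mu>)))"
proof -
  define \<kappa> \<gamma> where "\<kappa> = L / \<mu>" and "\<gamma> = (sqrt (8 * \<kappa> + 1) + 3) / (2 * \<kappa> - 2)"
  have "1 < \<kappa>"
    using mu_pos mu_L by (simp add: \<kappa>_def)
  moreover have "(2 * \<kappa> - 2) * \<gamma> = sqrt (8 * \<kappa> + 1) + 3"
    using \<open>1 < \<kappa>\<close> by (simp add: \<gamma>_def)
  ultimately have \<gamma>: "0 < \<gamma>" and root: "\<kappa> * \<gamma>\<^sup>2 = (1 + \<gamma>) * (2 + \<gamma>)"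
    by (rule sc_ogm_gamma_root)+
  have \<mu>: "\<mu> * ((1 + \<gamma>) * (2 + \<gamma>)) = L * \<gamma>\<^sup>2"
    using root mu_pos by (simp add: \<kappa>_def field_simps)
  have "y 0 = x 0"
    by (simp add: x_0 y_0)
  moreover have "\<And>k. x (Suc k) = y (Suc k) + (1 / (2 * \<gamma> + 1)) *\<^sub>R (y (Suc k) - y k)
      + (1 / (2 * \<gamma> + 1)) *\<^sub>R (y (Suc k) - x k)"
    unfolding \<gamma>_def \<kappa>_def by (rule x_step)
  ultimately have "\<forall>k\<ge>1. f (y k) - f xs
      \<le> (1 + \<gamma>) powr (- real k + 1) * ((\<mu> + 2 * L) / 2) * (norm (x0 - xs))\<^sup>2"
    using sc_ogm_convergence_rate[where x = x and y = y, OF grad sc lip mu_pos mu_L xs_min \<gamma> \<mu> _ y_step]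
      x_0 by auto
  moreover have "(\<lambda>k::nat. (1 + \<gamma>) powr (- real k + 1) * ((\<mu> + 2 * L) / 2) * (norm (x0 - xs))\<^sup>2)
      \<in> O(\<lambda>k. exp (- sqrt 2 * real k / sqrt \<kappa>))"
  proof -
    have "(\<lambda>k::nat. (1 + \<gamma>) powr (- real k + 1) * ((\<mu> + 2 * L) / 2 * (norm (x0 - xs))\<^sup>2))
        \<in> O(\<lambda>k. exp (- (sqrt 2 / sqrt \<kappa>) * real k))"
      using \<gamma> sc_ogm_rate_exponent[OF \<gamma> root] by (intro powr_bigo_exp) auto
    moreover have "(\<lambda>k::nat. (1 + \<gamma>) powr (- real k + 1) * ((\<mu> + 2 * L) / 2 * (norm (x0 - xs))\<^sup>2))
        = (\<lambda>k. (1 + \<gamma>) powr (- real k + 1) * ((\<mu> + 2 * L) / 2) * (norm (x0 - xs))\<^sup>2)"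
      and "(\<lambda>k::nat. exp (- (sqrt 2 / sqrt \<kappa>) * real k)) = (\<lambda>k. exp (- sqrt 2 * real k / sqrt \<kappa>))"
      by (simp_all add: mult.assoc)
    \<comment> \<open>Rewriting only: simp on the Landau statement itself would invoke its conditional
      cancellation rules.\<close>
    ultimately show ?thesis
      by (simp only:)
  qed
  ultimately show ?thesis
    unfolding \<gamma>_def \<kappa>_def by (rule conjI)
qed


theorem theorem3:
  fixes f :: "real ^ 'n \<Rightarrow> real"
    and grad :: "real ^ 'n \<Rightarrow> real ^ 'n"
    and \<mu> L :: real
    and xs x0 :: "real ^ 'n"
    and x y :: "nat \<Rightarrow> real ^ 'n"
  assumes grad: "\<And>z. (f has_derivative (\<lambda>h. grad z \<bullet> h)) (at z)"
    and sc: "strongly_convex \<mu> f"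
    and lip: "\<And>u v. norm (grad u - grad v) \<le> L * norm (u - v)"
    and mu_pos: "0 < \<mu>" and mu_L: "\<mu> < L"
    and xs_min: "\<And>z. f xs \<le> f z"
    and x_0: "x 0 = x0" and y_0: "y 0 = x0"
    and y_step: "\<And>k. y (Suc k) = x k - (1 / L) *\<^sub>R grad (x k)"
    and x_step: "\<And>k. x (Suc k) = y (Suc k)
        + (1 / (2 * ((sqrt (8 * (L / \<mu>) + 1) + 3) / (2 * (L / \<mu>) - 2)) + 1)) *\<^sub>R (y (Suc k) - y k)
        + (1 / (2 * ((sqrt (8 * (L / \<mu>) + 1) + 3) / (2 * (L / \<mu>) - 2)) + 1)) *\<^sub>R (y (Suc k) - x k)"
  shows "(\<forall>k\<ge>1. f (y k) - f xs \<le>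
           (1 + (sqrt (8 * (L / \<mu>) + 1) + 3) / (2 * (L / \<mu>) - 2)) powr (- real k + 1)
             * ((\<mu> + 2 * L) / 2) * (norm (x0 - xs))\<^sup>2)
       \<and> (\<lambda>k::nat. (1 + (sqrt (8 * (L / \<mu>) + 1) + 3) / (2 * (L / \<mu>) - 2)) powr (- real k + 1)
             * ((\<mu> + 2 * L) / 2) * (norm (x0 - xs))\<^sup>2)
           \<in> O(\<lambda>k. exp (- sqrt 2 * real k / sqrt (L / \<mu>)))"
  using assms by (rule sc_ogm_convergence)

end
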